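(* Fix $L\ge1$, rates $a_1,\ldots,a_L>0$, $\alpha,\beta>0$ with $\alpha a_i<1$ for all $i$, an $L$-particle configuration $\vec{\mathsf{x}}$, and $m\in\{1,\ldots,L\}$. With $\vec{\mathsf{x}}'$, $\mathsf{y}^{\dagger}_m$ and $\vec{\mathsf{y}}^{\,GB}$ constructed as described in the context, conditionally on $\vec{\mathsf{x}}$ the joint distribution of $(\mathsf{x}'_m,\mathsf{y}^{\dagger}_m)$ is the same as the joint distribution of $(\mathsf{x}'_m,\mathsf{y}^{GB}_m)$.
   Context: Fix $q\in(0,1)$; $(z;q)_k=\prod_{i=0}^{k-1}(1-zq^i)$. For $\gamma\in(0,1)$ and $m\in\mathbb{Z}_{\ge0}$ let $\mathbf{p}_{m,\gamma}(j)=\gamma^j(\gamma;q)_{m-j}\frac{(q;q)_m}{(q;q)_j(q;q)_{m-j}}$, $0\le j\le m$, and $\mathbf{p}_{+\infty,\gamma}(j)=\gamma^j(\gamma;q)_\infty/(q;q)_j$, $j\ge0$ (probability distributions). Configurations: $\vec{\mathsf{x}}=(\mathsf{x}_1>\ldots>\mathsf{x}_L)$ in $\mathbb{Z}$, with the convention $\mathsf{x}_0=+\infty$. Geometric $q$-TASEP move $\mathbf{G}_\alpha$ (rates $a_i$): each particle $i$ independently jumps to the right by $j$ with probability $\mathbf{p}_{\mathsf{x}_{i-1}-\mathsf{x}_i-1,\,a_i\alpha}(j)$. Bernoulli $q$-TASEP move $\mathbf{B}_\beta$: sequentially for $i=1,\ldots,L$, particle $i$ jumps right by one with probability $a_i\beta/(1+a_i\beta)$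 if $i=1$ or if particle $i-1$ has jumped in this move, and with probability $(1-q^{\mathsf{x}_{i-1}-\mathsf{x}_i-1})a_i\beta/(1+a_i\beta)$ otherwise (gaps measured before the move); else it stays. Vertex weights $\mathsf{L}_{u,a,\nu}(i_1,j_1;i_2,j_2)$, $i_1,i_2\in\mathbb{Z}_{\ge0}$, $j_1,j_2\in\{0,1\}$, vanish unless $i_1+j_1=i_2+j_2$, and for $g\in\mathbb{Z}_{\ge0}$: $\mathsf{L}(g,0;g,0)=\frac{1-auq^g}{1-au}$, $\mathsf{L}(g,0;g-1,1)=\frac{-au(1-q^g)}{1-au}$, $\mathsf{L}(g,1;g,1)=\frac{\nu q^g-au}{1-au}$, $\mathsf{L}(g,1;g+1,0)=\frac{1-\nu q^g}{1-au}$. Construction: given $\vec{\mathsf{x}}$, let $\vec{\mathsf{y}}$ be obtained by applying $\mathbf{B}_\beta$ and $\vec{\mathsf{x}}'$ by applying $\mathbf{G}_\alpha$, with independent randomness. Given $\mathsf{x}_{m-1},\mathsf{y}_{m-1},\mathsf{x}'_m$, set $i_1=\mathsf{x}_{m-1}-\mathsf{x}'_m-1$, $j_1=\mathsf{y}_{m-1}-\mathsf{x}_{m-1}$, sample $j_2\in\{0,1\}$ with probability $\mathsf{L}_{-\beta,a_m,\alpha a_m}(i_1,j_1;i_1+j_1-j_2,j_2)$, and set $\mathsf{y}^\dagger_m:=\mathsf{x}'_m+j_2$. For $m=1$, $\mathsf{x}_0=\mathsf{y}_0=+\infty$, $i_1=+\infty$ (with $q^{i_1}=0$), and $j_1$ may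 be taken $0$ or $1$ (the weights do not depend on this choice). Finally $\vec{\mathsf{y}}^{\,GB}$ is obtained from $\vec{\mathsf{x}}'$ by applying a further Bernoulli move $\mathbf{B}_\beta$ with randomness independent of everything above. *)

theory Defs
  imports "HOL-Probability.Probability"
begin

definition qpoch :: "real \<Rightarrow> real \<Rightarrow> nat \<Rightarrow> real" where
  "qpoch z q k = (\<Prod>i<k. 1 - z * q ^ i)"

definition qpoch_inf :: "real \<Rightarrow> real \<Rightarrow> real" where
  "qpoch_inf z q = (\<Prod>i. 1 - z * q ^ i)"

text \<open>Gaps live in nat option; None stands for +infinity.
  q to the power of a gap (q^infinity = 0).\<close>
definition qpow :: "real \<Rightarrow> nat option \<Rightarrow> real" where
  "qpow q g = (case g of None \<Rightarrow> 0 | Some n \<Rightarrow> q ^ n)"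

definition pgeo :: "real \<Rightarrow> real \<Rightarrow> nat option \<Rightarrow> nat \<Rightarrow> real" where
  "pgeo q \<gamma> g j = (case g of
      Some m \<Rightarrow> (if j \<le> m then \<gamma> ^ j * qpoch \<gamma> q (m - j) *
                   (qpoch q q m / (qpoch q q j * qpoch q q (m - j))) else 0)
    | None \<Rightarrow> \<gamma> ^ j * qpoch_inf \<gamma> q / qpoch q q j)"

definition geo_pmf :: "real \<Rightarrow> real \<Rightarrow> nat option \<Rightarrow> nat pmf" where
  "geo_pmf q \<gamma> g = embed_pmf (pgeo q \<gamma> g)"

text \<open>Configurations: x :: nat => int, particle i at x i for 1 <= i <= L
  (values at other indices are irrelevant). Gap in front of particle i,
  x_{i-1} - x_i - 1, with x_0 = +infinity.\<close>
definition gap :: "(nat \<Rightarrow> int) \<Rightarrow> nat \<Rightarrow> nat option" where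
  "gap x i = (if i \<le> 1 then None else Some (nat (x (i - 1) - x i - 1)))"

definition config :: "nat \<Rightarrow> (nat \<Rightarrow> int) \<Rightarrow> bool" where
  "config L x \<longleftrightarrow> (\<forall>i. 1 \<le> i \<longrightarrow> i < L \<longrightarrow> x (Suc i) < x i)"

definition geo_move :: "real \<Rightarrow> nat \<Rightarrow> (nat \<Rightarrow> real) \<Rightarrow> real \<Rightarrow> (nat \<Rightarrow> int) \<Rightarrow> (nat \<Rightarrow> int) pmf" where
  "geo_move q L a \<alpha> x =
     map_pmf (\<lambda>J i. x i + int (J i))
       (Pi_pmf {1..L} 0 (\<lambda>i. geo_pmf q (a i * \<alpha>) (gap x i)))"

fun bern_aux :: "real \<Rightarrow> (nat \<Rightarrow> real) \<Rightarrow> real \<Rightarrow> (nat \<Rightarrow> int) \<Rightarrow> nat \<Rightarrow> (nat \<Rightarrow> int) pmf" where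
  "bern_aux q a \<beta> x 0 = return_pmf x"
| "bern_aux q a \<beta> x (Suc n) =
     bind_pmf (bern_aux q a \<beta> x n) (\<lambda>y.
       let i = Suc n;
           r = a i * \<beta> / (1 + a i * \<beta>);
           pr = (if i = 1 \<or> y (i - 1) \<noteq> x (i - 1) then r
                 else (1 - q ^ nat (x (i - 1) - x i - 1)) * r)
       in map_pmf (\<lambda>b. y(i := x i + (if b then 1 else 0))) (bernoulli_pmf pr))"

definition bern_move :: "real \<Rightarrow> nat \<Rightarrow> (nat \<Rightarrow> real) \<Rightarrow> real \<Rightarrow> (nat \<Rightarrow> int) \<Rightarrow> (nat \<Rightarrow> int) pmf" where
  "bern_move q L a \<beta> x = bern_aux q a \<beta> x L"

text \<open>Vertex weights L_{u,a,nu}(i1,j1; i1+j1-j2, j2), indexed by (i1,j1,j2);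
  i1 may be +infinity (None), in which case q^{i1} = 0.\<close>
definition Lw :: "real \<Rightarrow> real \<Rightarrow> real \<Rightarrow> real \<Rightarrow> nat option \<Rightarrow> nat \<Rightarrow> nat \<Rightarrow> real" where
  "Lw q u a \<nu> i1 j1 j2 =
     (let g = qpow q i1 in
      if j1 = 0 \<and> j2 = 0 then (1 - a * u * g) / (1 - a * u)
      else if j1 = 0 \<and> j2 = 1 then - a * u * (1 - g) / (1 - a * u)
      else if j1 = 1 \<and> j2 = 1 then (\<nu> * g - a * u) / (1 - a * u)
      else if j1 = 1 \<and> j2 = 0 then (1 - \<nu> * g) / (1 - a * u)
      else 0)"

definition dagger_pair :: "real \<Rightarrow> nat \<Rightarrow> (nat \<Rightarrow> real) \<Rightarrow> real \<Rightarrow> real \<Rightarrow> (nat \<Rightarrow> int) \<Rightarrow> nat \<Rightarrow> (int \<times> int) pmf" where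
  "dagger_pair q L a \<alpha> \<beta> x m =
     bind_pmf (pair_pmf (bern_move q L a \<beta> x) (geo_move q L a \<alpha> x)) (\<lambda>(y, x').
       let i1 = (if m = 1 then None else Some (nat (x (m - 1) - x' m - 1)));
           j1 = (if m = 1 then 0 else nat (y (m - 1) - x (m - 1)))
       in map_pmf (\<lambda>b. (x' m, x' m + (if b then 1 else 0)))
            (bernoulli_pmf (Lw q (- \<beta>) (a m) (\<alpha> * a m) i1 j1 1)))"

definition GB_pair :: "real \<Rightarrow> nat \<Rightarrow> (nat \<Rightarrow> real) \<Rightarrow> real \<Rightarrow> real \<Rightarrow> (nat \<Rightarrow> int) \<Rightarrow> nat \<Rightarrow> (int \<times> int) pmf" where
  "GB_pair q L a \<alpha> \<beta> x m =
     bind_pmf (geo_move q L a \<alpha> x) (\<lambda>x'.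
       map_pmf (\<lambda>y. (x' m, y m)) (bern_move q L a \<beta> x'))"

end

theory Submission
  imports Defs
begin

text \<open>Condition on the geometric jump \<open>v\<close> of particle \<open>m\<close>. Then \<open>y\<^sup>\<dagger>\<^sub>m\<close> and
  \<open>y\<^sup>G\<^sup>B\<^sub>m\<close> are both \<open>x'\<^sub>m\<close> plus a Bernoulli variable, so only their success
  probabilities have to be compared. For \<open>y\<^sup>\<dagger>\<^sub>m\<close> it is affine in the probability \<open>p\<close>
  that particle \<open>m - 1\<close> jumps in the Bernoulli move from \<open>x\<close>; for \<open>y\<^sup>G\<^sup>B\<^sub>m\<close> it is
  affine in \<open>E[q\<^sup>J P(particle m - 1 stays in the Bernoulli move from x')]\<close>, where \<open>J\<close> is
  the geometric jump of particle \<open>m - 1\<close>. Induction along the sequential Bernoulli update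
  shows that this expectation equals \<open>1 - (1 + \<alpha>/\<beta>) p\<close>. The induction uses only the moment
  \<open>E q\<^sup>J = 1 - \<gamma> (1 - q\<^sup>g\<^sup>a\<^sup>p)\<close> of the \<open>q\<close>-geometric law and the identity
  \<open>(\<alpha>/\<beta>) r\<^sub>i = (1 - r\<^sub>i) \<alpha> a\<^sub>i\<close> for the Bernoulli rates \<open>r\<^sub>i = a\<^sub>i \<beta> / (1 + a\<^sub>i \<beta>)\<close>.\<close>

lemma qpoch_0 [simp]: "qpoch z q 0 = 1"
  by (simp add: qpoch_def)

lemma qpoch_Suc: "qpoch z q (Suc n) = qpoch z q n * (1 - z * q ^ n)"
  by (simp add: qpoch_def)

lemma qpoch_pos:
  assumes "0 \<le> z" "z < 1" "0 \<le> q" "q \<le> 1"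
  shows "0 < qpoch z q n"
proof (induction n)
  case (Suc n)
  have "z * q ^ n \<le> z * 1" using assms by (intro mult_left_mono power_le_one) auto
  then show ?case using Suc assms by (simp add: qpoch_Suc)
qed simp

definition qbinom :: "real \<Rightarrow> nat \<Rightarrow> nat \<Rightarrow> real" where
  "qbinom q n k = (if k \<le> n then qpoch q q n / (qpoch q q k * qpoch q q (n - k)) else 0)"

definition qbinom_weight :: "real \<Rightarrow> real \<Rightarrow> nat \<Rightarrow> nat \<Rightarrow> real" where
  "qbinom_weight q \<gamma> n j = \<gamma> ^ j * qpoch \<gamma> q (n - j) * qbinom q n j"

lemma qbinom_eq_0: "n < k \<Longrightarrow> qbinom q n k = 0"
  by (simp add: qbinom_def)

lemma pgeo_Some: "pgeo q \<gamma> (Some n) = qbinom_weight q \<gamma> n"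
  by (simp add: pgeo_def qbinom_weight_def qbinom_def fun_eq_iff)

lemma qbinom_weight_nonneg:
  assumes "0 < q" "q < 1" "0 \<le> \<gamma>" "\<gamma> < 1"
  shows "0 \<le> qbinom_weight q \<gamma> n j"
  using assms qpoch_pos[of \<gamma> q, THEN less_imp_le] qpoch_pos[of q q, THEN less_imp_le]
  by (auto simp: qbinom_weight_def qbinom_def intro!: mult_nonneg_nonneg divide_nonneg_nonneg)

context
  fixes q \<gamma> :: real
  assumes q: "0 < q" "q < 1"
begin

private lemma qpoch_q_nonzero: "qpoch q q n \<noteq> 0"
  using qpoch_pos[of q q n] q by simp

lemma qbinom_0_right [simp]: "qbinom q n 0 = 1"
  using qpoch_q_nonzero by (simp add: qbinom_def)

lemma qbinom_Suc_Suc: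
  "qbinom q (Suc n) (Suc k) = qbinom q n (Suc k) + q ^ (n - k) * qbinom q n k"
proof (cases "k < n")
  case True
  then obtain l where n: "n = Suc (k + l)" by (metis add_Suc_right less_iff_Suc_add)
  define u where "u = q ^ Suc k"
  define v where "v = q ^ Suc l"
  have "u < 1" "v < 1" unfolding u_def v_def using power_Suc_less_one[OF q] by auto
  have "1 - u \<noteq> 0" "1 - v \<noteq> 0" using \<open>u < 1\<close> \<open>v < 1\<close> by auto
  have eqs: "qpoch q q (Suc (Suc (k + l))) = qpoch q q (Suc (k + l)) * (1 - u * v)"
    "qpoch q q (Suc k) = qpoch q q k * (1 - u)" "qpoch q q (Suc l) = qpoch q q l * (1 - v)"
    unfolding u_def v_def qpoch_Suc by (simp_all add: power_add mult_ac)
  have "qbinom q (Suc n) (Suc k) = qpoch q q (Suc (Suc (k + l))) / (qpoch q q (Suc k) * qpoch q q (Suc l))"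
    "qbinom q n (Suc k) = qpoch q q (Suc (k + l)) / (qpoch q q (Suc k) * qpoch q q l)"
    "qbinom q n k = qpoch q q (Suc (k + l)) / (qpoch q q k * qpoch q q (Suc l))"
    "q ^ (n - k) = v"
    by (simp_all add: qbinom_def n v_def)
  moreover have "P * (1 - u * v) / (A * (1 - u) * (B * (1 - v)))
      = P / (A * (1 - u) * B) + v * (P / (A * (B * (1 - v))))" if "A \<noteq> 0" "B \<noteq> 0" for P A B
    using that \<open>1 - u \<noteq> 0\<close> \<open>1 - v \<noteq> 0\<close> by (simp add: divide_simps) (simp add: algebra_simps)
  ultimately show ?thesis using qpoch_q_nonzero unfolding eqs by simp
qed (use qpoch_q_nonzero in \<open>auto simp: qbinom_def le_Suc_eq\<close>)

lemma qbinom_weight_Suc_0: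
  "qbinom_weight q \<gamma> (Suc n) 0 = qbinom_weight q \<gamma> n 0 * (1 - \<gamma> * q ^ n)"
  using q by (simp add: qbinom_weight_def qpoch_Suc)

lemma qbinom_weight_Suc_Suc:
  "qbinom_weight q \<gamma> (Suc n) (Suc j) =
     qbinom_weight q \<gamma> n (Suc j) * (1 - \<gamma> * q ^ (n - Suc j)) + qbinom_weight q \<gamma> n j * \<gamma> * q ^ (n - j)"
proof (cases "j < n")
  case True
  then have "qpoch \<gamma> q (n - j) = qpoch \<gamma> q (n - Suc j) * (1 - \<gamma> * q ^ (n - Suc j))"
    by (metis Suc_diff_Suc qpoch_Suc)
  then show ?thesis
    unfolding qbinom_weight_def diff_Suc_Suc qbinom_Suc_Suc by (simp only:) (simp add: algebra_simps)
next
  case False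
  then show ?thesis
    using q by (simp add: qbinom_weight_def qbinom_Suc_Suc qbinom_eq_0 algebra_simps)
qed

lemma qbinom_weight_eq_0: "n < j \<Longrightarrow> qbinom_weight q \<gamma> n j = 0"
  using q by (simp add: qbinom_weight_def qbinom_eq_0)

lemma sum_qbinom_weight_Suc:
  "(\<Sum>j\<le>Suc n. qbinom_weight q \<gamma> (Suc n) j * h j) =
   (\<Sum>j\<le>n. qbinom_weight q \<gamma> n j * ((1 - \<gamma> * q ^ (n - j)) * h j + \<gamma> * q ^ (n - j) * h (Suc j)))"
proof -
  define stay where "stay j = qbinom_weight q \<gamma> n j * (1 - \<gamma> * q ^ (n - j)) * h j" for j
  define move where "move j = qbinom_weight q \<gamma> n j * \<gamma> * q ^ (n - j) * h (Suc j)" for j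
  have "(\<Sum>j\<le>Suc n. qbinom_weight q \<gamma> (Suc n) j * h j) = stay 0 + (\<Sum>j\<le>n. stay (Suc j) + move j)"
    unfolding sum.atMost_Suc_shift qbinom_weight_Suc_0 qbinom_weight_Suc_Suc stay_def move_def
    by (simp add: distrib_right)
  also have "\<dots> = (\<Sum>j\<le>Suc n. stay j) + (\<Sum>j\<le>n. move j)"
    by (simp add: sum.distrib sum.atMost_Suc_shift del: sum.atMost_Suc)
  also have "\<dots> = (\<Sum>j\<le>n. stay j + move j)"
    by (simp add: sum.distrib stay_def qbinom_weight_eq_0)
  finally show ?thesis
    by (simp add: stay_def move_def algebra_simps)
qed

lemma sum_qbinom_weight: "(\<Sum>j\<le>n. qbinom_weight q \<gamma> n j) = 1"
proof (induction n)
  case (Suc n)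
  show ?case
    using sum_qbinom_weight_Suc[of n "\<lambda>_. 1"] Suc by (simp add: algebra_simps)
qed (use q in \<open>simp add: qbinom_weight_def\<close>)

lemma sum_qbinom_weight_qpower: "(\<Sum>j\<le>n. qbinom_weight q \<gamma> n j * q ^ j) = 1 - \<gamma> + \<gamma> * q ^ n"
proof (induction n)
  case (Suc n)
  have step: "(1 - \<gamma> * q ^ (n - j)) * q ^ j + \<gamma> * q ^ (n - j) * (q * q ^ j) = q ^ j - \<gamma> * (1 - q) * q ^ n"
    if "j \<le> n" for j
    using that by (simp add: algebra_simps flip: power_add)
  have "(\<Sum>j\<le>Suc n. qbinom_weight q \<gamma> (Suc n) j * q ^ j)
      = (\<Sum>j\<le>n. qbinom_weight q \<gamma> n j * (q ^ j - \<gamma> * (1 - q) * q ^ n))"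
    unfolding sum_qbinom_weight_Suc by (intro sum.cong refl) (simp add: step)
  also have "\<dots> = (\<Sum>j\<le>n. qbinom_weight q \<gamma> n j * q ^ j)
      - \<gamma> * (1 - q) * q ^ n * (\<Sum>j\<le>n. qbinom_weight q \<gamma> n j)"
    by (simp add: right_diff_distrib sum_subtractf sum_distrib_left mult_ac)
  also have "\<dots> = 1 - \<gamma> + \<gamma> * q ^ Suc n"
    using Suc by (simp add: sum_qbinom_weight algebra_simps)
  finally show ?case .
qed (use q in \<open>simp add: qbinom_weight_def\<close>)

end

definition qexp :: "real \<Rightarrow> real \<Rightarrow> real" where
  "qexp q z = (\<Sum>n. 1 / qpoch q q n * z ^ n)"

context
  fixes q :: real
  assumes q: "0 < q" "q < 1"
begin

private lemma qpoch_q_pos: "0 < qpoch q q n"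
  using q by (intro qpoch_pos) auto

lemma summable_qexp:
  assumes z: "0 \<le> z" "z < 1"
  shows "summable (\<lambda>n. 1 / qpoch q q n * z ^ n)"
proof -
  define c where "c = (1 + z) / 2"
  define e where "e = (1 - z) / (1 + z)"
  have "e > 0" using z by (simp add: e_def)
  then obtain N where N: "q ^ N < e" using real_arch_pow_inv q(2) by blast
  have "c < 1" using z by (simp add: c_def)
  then show ?thesis
  proof (rule summable_ratio_test)
    fix n assume n: "N \<le> n"
    have less_1: "q ^ Suc n < 1" using power_Suc_less_one[OF q] .
    have "q ^ Suc n \<le> q ^ N" using q n by (intro power_decreasing) auto
    then have "q ^ Suc n * (1 + z) \<le> q ^ N * (1 + z)" using z by (intro mult_right_mono) auto
    moreover have "q ^ N * (1 + z) < 1 - z" using N z by (simp add: e_def field_simps)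
    ultimately have "z \<le> c * (1 - q ^ Suc n)" by (simp add: c_def algebra_simps)
    then have ratio: "z / (1 - q ^ Suc n) \<le> c" using less_1 by (simp add: divide_le_eq mult.commute)
    have term_nonneg: "0 \<le> 1 / qpoch q q n * z ^ n"
      using qpoch_q_pos[of n] z by (simp add: zero_le_divide_iff less_imp_le)
    have "1 / qpoch q q (Suc n) * z ^ Suc n = (1 / qpoch q q n * z ^ n) * (z / (1 - q ^ Suc n))"
      by (simp add: qpoch_Suc)
    also have "\<dots> \<le> (1 / qpoch q q n * z ^ n) * c" by (rule mult_left_mono[OF ratio term_nonneg])
    finally show "norm (1 / qpoch q q (Suc n) * z ^ Suc n) \<le> c * norm (1 / qpoch q q n * z ^ n)"
      using term_nonneg less_1 z qpoch_q_pos[of n] qpoch_q_pos[of "Suc n"] by (simp add: mult.commute)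
  qed
qed

lemma qexp_q_mult:
  assumes z: "0 \<le> z" "z < 1"
  shows "qexp q (q * z) = (1 - z) * qexp q z"
proof -
  let ?f = "\<lambda>n. 1 / qpoch q q n * z ^ n"
  have s: "summable ?f" by (rule summable_qexp[OF z])
  have "q * z \<le> 1 * z" using q z by (intro mult_right_mono) auto
  then have "summable (\<lambda>n. 1 / qpoch q q n * (q * z) ^ n)" using q z by (intro summable_qexp) auto
  from suminf_split_head[OF this]
  have head: "(\<Sum>n. 1 / qpoch q q (Suc n) * (q * z) ^ Suc n) = qexp q (q * z) - 1"
    by (simp add: qexp_def)
  have "1 / qpoch q q (Suc n) * (q * z) ^ Suc n = ?f (Suc n) - z * ?f n" for n
    using qpoch_q_pos[of n] power_Suc_less_one[OF q, of n]
    by (simp add: qpoch_Suc field_simps power_mult_distrib)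
  moreover have "summable (\<lambda>n. ?f (Suc n))" by (rule iffD2[OF summable_Suc_iff s])
  moreover have "summable (\<lambda>n. z * ?f n)" by (rule summable_mult[OF s])
  ultimately have "(\<Sum>n. 1 / qpoch q q (Suc n) * (q * z) ^ Suc n) = (\<Sum>n. ?f (Suc n)) - (\<Sum>n. z * ?f n)"
    by (simp only: suminf_diff[symmetric])
  also have "\<dots> = (qexp q z - 1) - z * qexp q z"
    using suminf_split_head[OF s] suminf_mult[OF s] by (simp add: qexp_def)
  finally show ?thesis using head by (simp add: algebra_simps)
qed

lemma qpoch_mult_qexp:
  assumes z: "0 \<le> z" "z < 1"
  shows "qpoch z q n * qexp q z = qexp q (q ^ n * z)"
proof (induction n)
  case (Suc n)
  have "q ^ n * z \<le> 1 * z" using q z by (intro mult_right_mono power_le_one) auto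
  then have "qexp q (q * (q ^ n * z)) = (1 - q ^ n * z) * qexp q (q ^ n * z)"
    using q z by (intro qexp_q_mult) auto
  also have "\<dots> = qpoch z q (Suc n) * qexp q z"
    by (simp add: qpoch_Suc flip: Suc)
  finally show ?case by (simp add: mult.assoc)
qed simp

lemma qexp_pos: "0 < z \<Longrightarrow> z < 1 \<Longrightarrow> 0 < qexp q z"
  unfolding qexp_def using qpoch_q_pos by (intro suminf_pos summable_qexp) auto

lemma qexp_qpower_tendsto: "(\<lambda>n. qexp q (q ^ n * z)) \<longlonglongrightarrow> 1"
proof -
  have "summable (\<lambda>n. 1 / qpoch q q n * (1/2::real) ^ n)" by (rule summable_qexp) auto
  then have "isCont (qexp q) 0"
    unfolding qexp_def by (rule isCont_powser) simp
  moreover have "(\<lambda>n. q ^ n * z) \<longlonglongrightarrow> 0"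
    using q by (intro tendsto_mult_left_zero LIMSEQ_power_zero) simp
  ultimately have "(\<lambda>n. qexp q (q ^ n * z)) \<longlonglongrightarrow> qexp q 0"
    by (rule isCont_tendsto_compose)
  moreover have "qexp q 0 = 1"
    unfolding qexp_def using powser_zero[of "\<lambda>n. 1 / qpoch q q n"] by simp
  ultimately show ?thesis by simp
qed

lemma qpoch_inf_eq_inverse_qexp:
  assumes z: "0 < z" "z < 1"
  shows "qpoch_inf z q = 1 / qexp q z"
proof -
  have pos: "0 < qexp q z" by (rule qexp_pos[OF z])
  have "(\<lambda>n. qpoch z q n) = (\<lambda>n. qexp q (q ^ n * z) / qexp q z)"
    using qpoch_mult_qexp[of z] z pos by (auto simp: field_simps)
  moreover have "(\<lambda>n. qexp q (q ^ n * z) / qexp q z) \<longlonglongrightarrow> 1 / qexp q z"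
    using pos by (intro tendsto_divide qexp_qpower_tendsto tendsto_const) auto
  ultimately have "(\<lambda>n. \<Prod>i<n. 1 - z * q ^ i) \<longlonglongrightarrow> 1 / qexp q z"
    by (simp add: qpoch_def)
  then show ?thesis
    unfolding qpoch_inf_def using pos by (intro prodinf_eq_prod_lim') auto
qed

end

lemma pmf_embed_pmf_sums:
  fixes f :: "nat \<Rightarrow> real"
  assumes "\<And>j. 0 \<le> f j" "f sums 1"
  shows "pmf (embed_pmf f) j = f j"
proof (rule pmf_embed_pmf)
  have "(\<integral>\<^sup>+j. ennreal (f j) \<partial>count_space UNIV) = (\<Sum>j. ennreal (f j))"
    by (rule nn_integral_count_space_nat)
  also have "\<dots> = 1" using suminf_ennreal_eq[OF assms] by simp
  finally show "(\<integral>\<^sup>+j. ennreal (f j) \<partial>count_space UNIV) = 1" .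
qed (use assms in simp)

lemma expectation_pmf_nat_sums:
  fixes M :: "nat pmf" and f :: "nat \<Rightarrow> real"
  assumes "\<And>j. 0 \<le> f j" "(\<lambda>j. pmf M j * f j) sums s"
  shows "measure_pmf.expectation M f = s"
proof -
  have "integrable (count_space UNIV) (\<lambda>j. pmf M j * f j)"
    using assms sums_summable by (auto simp: integrable_count_space_nat_iff abs_mult)
  then have "measure_pmf.expectation M f = (\<Sum>j. pmf M j * f j)"
    by (simp add: measure_pmf_eq_density integral_density integral_count_space_nat)
  then show ?thesis using assms(2) by (simp add: sums_iff)
qed

lemma expectation_pmf_unit_interval:
  fixes h :: "'a \<Rightarrow> real"
  assumes "\<And>z. z \<in> set_pmf M \<Longrightarrow> 0 \<le> h z \<and> h z \<le> 1"
  shows "0 \<le> measure_pmf.expectation M h \<and> measure_pmf.expectation M h \<le> 1"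
proof -
  have "integrable M h"
    by (rule measure_pmf.integrable_const_bound[where B=1]) (use assms in \<open>auto intro!: AE_pmfI\<close>)
  then have "measure_pmf.expectation M h \<le> measure_pmf.expectation M (\<lambda>_. 1)"
    by (rule integral_mono_AE) (use assms in \<open>auto intro!: AE_pmfI\<close>)
  moreover have "0 \<le> measure_pmf.expectation M h"
    by (rule integral_nonneg_AE) (use assms in \<open>auto intro!: AE_pmfI\<close>)
  ultimately show ?thesis by simp
qed

lemma bind_pmf_bernoulli:
  assumes h: "\<And>z. z \<in> set_pmf M \<Longrightarrow> 0 \<le> h z \<and> h z \<le> 1"
  shows "bind_pmf M (\<lambda>z. bernoulli_pmf (h z)) = bernoulli_pmf (measure_pmf.expectation M h)"
proof (rule pmf_eqI)
  fix b :: bool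
  have E: "0 \<le> measure_pmf.expectation M h" "measure_pmf.expectation M h \<le> 1"
    using expectation_pmf_unit_interval[of M h] h by auto
  have int: "integrable M h"
    by (rule measure_pmf.integrable_const_bound[where B=1]) (use h in \<open>auto intro!: AE_pmfI\<close>)
  have "pmf (bind_pmf M (\<lambda>z. bernoulli_pmf (h z))) b = (\<integral>z. (if b then h z else 1 - h z) \<partial>M)"
    unfolding pmf_bind by (rule integral_cong_AE) (use h in \<open>auto intro!: AE_pmfI\<close>)
  also have "\<dots> = (if b then measure_pmf.expectation M h else 1 - measure_pmf.expectation M h)"
    using int by (cases b) (simp_all add: Bochner_Integration.integral_diff[OF _ int])
  finally show "pmf (bind_pmf M (\<lambda>z. bernoulli_pmf (h z))) b = pmf (bernoulli_pmf (measure_pmf.expectation M h)) b"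
    using E by (cases b) simp_all
qed

lemma pmf_bool_True: "pmf (M :: bool pmf) True = 1 - pmf M False"
proof -
  have "(\<Sum>b\<in>UNIV. pmf M b) = 1" by (rule sum_pmf_eq_1) auto
  then show ?thesis by (simp add: UNIV_bool)
qed

lemma expectation_bool_pmf:
  "measure_pmf.expectation (M :: bool pmf) (f :: bool \<Rightarrow> real) = pmf M True * f True + pmf M False * f False"
  by (subst integral_measure_pmf[of UNIV]) (auto simp: UNIV_bool)

lemma integrable_measure_pmf_bounded:
  fixes f :: "'a \<Rightarrow> real"
  assumes "\<And>z. \<bar>f z\<bar> \<le> B"
  shows "integrable (measure_pmf M) f"
  by (rule measure_pmf.integrable_const_bound[where B=B]) (use assms in auto)

lemma bind_pmf_pair_pmf: "bind_pmf (pair_pmf A B) f = bind_pmf A (\<lambda>a. bind_pmf B (\<lambda>b. f (a, b)))"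
  by (simp add: pair_pmf_def bind_assoc_pmf bind_return_pmf)

lemma bind_Pi_pmf_component:
  assumes "finite I" "i \<in> I"
  shows "bind_pmf (Pi_pmf I d D) (\<lambda>F. \<Theta> (F i)) = bind_pmf (D i) \<Theta>"
proof -
  have "bind_pmf (Pi_pmf I d D) (\<lambda>F. \<Theta> (F i)) = bind_pmf (map_pmf (\<lambda>F. F i) (Pi_pmf I d D)) \<Theta>"
    by (simp add: bind_map_pmf)
  then show ?thesis using Pi_pmf_component[OF assms(1), of i d D] assms(2) by simp
qed

lemma expectation_Pi_pmf_component:
  fixes f :: "'b \<Rightarrow> real"
  assumes "finite I" "i \<in> I"
  shows "(\<integral>F. f (F i) \<partial>Pi_pmf I d D) = measure_pmf.expectation (D i) f"
  using Pi_pmf_component[OF assms(1), of i d D] assms(2) by (metis integral_map_pmf)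

lemma Pi_pmf_component_in_set_pmf:
  assumes "finite I" "F \<in> set_pmf (Pi_pmf I d D)" "i \<in> I"
  shows "F i \<in> set_pmf (D i)"
  using assms set_Pi_pmf[OF assms(1), of d D] by (auto simp: PiE_dflt_def)

locale q_geometric =
  fixes q \<gamma> :: real
  assumes q_pos: "0 < q" and q_less_1: "q < 1" and \<gamma>_pos: "0 < \<gamma>" and \<gamma>_less_1: "\<gamma> < 1"
begin

lemma pgeo_None: "pgeo q \<gamma> None = (\<lambda>j. 1 / qexp q \<gamma> * (1 / qpoch q q j * \<gamma> ^ j))"
  using qpoch_inf_eq_inverse_qexp[of q \<gamma>] q_pos q_less_1 \<gamma>_pos \<gamma>_less_1 by (simp add: pgeo_def fun_eq_iff)

lemma pgeo_nonneg: "0 \<le> pgeo q \<gamma> g j"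
  using qexp_pos[of q \<gamma>] qpoch_pos[of q q j] qbinom_weight_nonneg[of q \<gamma>] q_pos q_less_1 \<gamma>_pos \<gamma>_less_1
  by (cases g) (simp_all add: pgeo_None pgeo_Some)

lemma pgeo_qpower_sums: "(\<lambda>j. pgeo q \<gamma> g j * q ^ j) sums (1 - \<gamma> * (1 - qpow q g))"
proof (cases g)
  case None
  have "q * \<gamma> < 1 * 1" using q_pos q_less_1 \<gamma>_pos \<gamma>_less_1 by (intro mult_strict_mono) auto
  then have "(\<lambda>j. 1 / qpoch q q j * (q * \<gamma>) ^ j) sums qexp q (q * \<gamma>)"
    unfolding qexp_def using q_pos q_less_1 \<gamma>_pos by (intro summable_sums summable_qexp) auto
  from sums_mult[OF this, of "1 / qexp q \<gamma>"]
  have "(\<lambda>j. pgeo q \<gamma> None j * q ^ j) sums (qexp q (q * \<gamma>) / qexp q \<gamma>)"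
    by (simp add: pgeo_None power_mult_distrib mult_ac)
  moreover have "qexp q (q * \<gamma>) / qexp q \<gamma> = 1 - \<gamma>"
    using qexp_q_mult[of q \<gamma>] qexp_pos[of q \<gamma>] q_pos q_less_1 \<gamma>_pos \<gamma>_less_1 by simp
  ultimately show ?thesis using None by (simp add: qpow_def)
next
  case (Some n)
  have "(\<lambda>j. qbinom_weight q \<gamma> n j * q ^ j) sums (\<Sum>j\<le>n. qbinom_weight q \<gamma> n j * q ^ j)"
    using qbinom_weight_eq_0[of q n] q_pos q_less_1 by (intro sums_finite) auto
  moreover have "(\<Sum>j\<le>n. qbinom_weight q \<gamma> n j * q ^ j) = 1 - \<gamma> * (1 - qpow q (Some n))"
    using sum_qbinom_weight_qpower[of q \<gamma> n] q_pos q_less_1 by (simp add: qpow_def algebra_simps)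
  ultimately show ?thesis using Some by (simp add: pgeo_Some)
qed

lemma pgeo_sums: "pgeo q \<gamma> g sums 1"
proof (cases g)
  case None
  have "(\<lambda>j. 1 / qpoch q q j * \<gamma> ^ j) sums qexp q \<gamma>"
    unfolding qexp_def using q_pos q_less_1 \<gamma>_pos \<gamma>_less_1 by (intro summable_sums summable_qexp) auto
  from sums_mult[OF this, of "1 / qexp q \<gamma>"] show ?thesis
    using None qexp_pos[of q \<gamma>] q_pos q_less_1 \<gamma>_pos \<gamma>_less_1 by (simp add: pgeo_None)
next
  case (Some n)
  have "(\<lambda>j. qbinom_weight q \<gamma> n j) sums (\<Sum>j\<le>n. qbinom_weight q \<gamma> n j)"
    using qbinom_weight_eq_0[of q n] q_pos q_less_1 by (intro sums_finite) auto
  then show ?thesis using Some sum_qbinom_weight[of q \<gamma> n] q_pos q_less_1 by (simp add: pgeo_Some)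
qed

lemma pmf_geo_pmf: "pmf (geo_pmf q \<gamma> g) j = pgeo q \<gamma> g j"
  unfolding geo_pmf_def by (rule pmf_embed_pmf_sums[OF pgeo_nonneg pgeo_sums])

lemma expectation_geo_pmf_qpower:
  "measure_pmf.expectation (geo_pmf q \<gamma> g) (\<lambda>j. q ^ j) = 1 - \<gamma> * (1 - qpow q g)"
  using q_pos pgeo_qpower_sums by (intro expectation_pmf_nat_sums) (simp_all add: pmf_geo_pmf)

lemma set_geo_pmf_Some: "j \<in> set_pmf (geo_pmf q \<gamma> (Some n)) \<Longrightarrow> j \<le> n"
  using qbinom_weight_eq_0[of q n j \<gamma>] q_pos q_less_1
  by (auto simp: set_pmf_iff pmf_geo_pmf pgeo_Some not_le[symmetric])

end

definition bern_rate :: "(nat \<Rightarrow> real) \<Rightarrow> real \<Rightarrow> nat \<Rightarrow> real" where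
  "bern_rate a \<beta> i = a i * \<beta> / (1 + a i * \<beta>)"

text \<open>\<open>jump_pmf q a \<beta> x n\<close> is the law of the event that particle \<open>n\<close> jumps in the
  Bernoulli move started from \<open>x\<close>.\<close>
fun jump_pmf :: "real \<Rightarrow> (nat \<Rightarrow> real) \<Rightarrow> real \<Rightarrow> (nat \<Rightarrow> int) \<Rightarrow> nat \<Rightarrow> bool pmf" where
  "jump_pmf q a \<beta> x 0 = return_pmf False"
| "jump_pmf q a \<beta> x (Suc n) = (if n = 0 then bernoulli_pmf (bern_rate a \<beta> 1) else
     bind_pmf (jump_pmf q a \<beta> x n) (\<lambda>b. bernoulli_pmf (if b then bern_rate a \<beta> (Suc n)
        else (1 - q ^ nat (x n - x (Suc n) - 1)) * bern_rate a \<beta> (Suc n))))"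

lemma jump_pmf_Suc:
  "1 \<le> n \<Longrightarrow> jump_pmf q a \<beta> x (Suc n) = bind_pmf (jump_pmf q a \<beta> x n) (\<lambda>b. bernoulli_pmf
     (if b then bern_rate a \<beta> (Suc n) else (1 - q ^ nat (x n - x (Suc n) - 1)) * bern_rate a \<beta> (Suc n)))"
  by simp

lemma jump_pmf_cong:
  assumes "\<And>i. i \<le> n \<Longrightarrow> x i = x' i"
  shows "jump_pmf q a \<beta> x n = jump_pmf q a \<beta> x' n"
  using assms
proof (induction n)
  case (Suc n)
  then have "jump_pmf q a \<beta> x n = jump_pmf q a \<beta> x' n" "x n - x (Suc n) = x' n - x' (Suc n)"
    by auto
  then show ?case by (simp only: jump_pmf.simps)
qed simp

lemma map_bern_aux_component:
  assumes "n \<le> N"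
  shows "map_pmf (\<lambda>y. y n) (bern_aux q a \<beta> x N) = map_pmf (\<lambda>y. y n) (bern_aux q a \<beta> x n)"
  using assms
proof (induction N)
  case (Suc N)
  show ?case
  proof (cases "n = Suc N")
    case False
    then have "map_pmf (\<lambda>y. y n) (bern_aux q a \<beta> x (Suc N)) = map_pmf (\<lambda>y. y n) (bern_aux q a \<beta> x N)"
      by (simp add: map_bind_pmf pmf.map_comp o_def Let_def map_pmf_def[of "\<lambda>y. y n" "bern_aux q a \<beta> x N"])
    then show ?thesis using Suc False by simp
  qed simp
qed simp

lemma bern_aux_Suc:
  assumes "1 \<le> n"
  shows "bern_aux q a \<beta> x (Suc n) = bind_pmf (bern_aux q a \<beta> x n) (\<lambda>y.
     map_pmf (\<lambda>b. y(Suc n := x (Suc n) + (if b then 1 else 0)))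
       (bernoulli_pmf (if y n \<noteq> x n then bern_rate a \<beta> (Suc n)
          else (1 - q ^ nat (x n - x (Suc n) - 1)) * bern_rate a \<beta> (Suc n))))"
  unfolding bern_aux.simps Let_def bern_rate_def diff_Suc_1 using assms by simp

lemma map_bern_aux_last:
  assumes "1 \<le> n"
  shows "map_pmf (\<lambda>y. y n) (bern_aux q a \<beta> x n) = map_pmf (\<lambda>b. x n + (if b then 1 else 0)) (jump_pmf q a \<beta> x n)"
  using assms
proof (induction n rule: nat_induct_at_least)
  case base
  then show ?case by (simp add: bind_return_pmf pmf.map_comp o_def bern_rate_def)
next
  case (Suc n)
  define step where "step v = map_pmf (\<lambda>b. x (Suc n) + (if b then 1 else 0))
      (bernoulli_pmf (if v \<noteq> x n then bern_rate a \<beta> (Suc n)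
         else (1 - q ^ nat (x n - x (Suc n) - 1)) * bern_rate a \<beta> (Suc n)))" for v
  have "map_pmf (\<lambda>y. y (Suc n)) (bern_aux q a \<beta> x (Suc n)) = bind_pmf (bern_aux q a \<beta> x n) (\<lambda>y. step (y n))"
    using Suc by (subst bern_aux_Suc) (simp_all add: map_bind_pmf pmf.map_comp o_def step_def)
  also have "\<dots> = bind_pmf (map_pmf (\<lambda>y. y n) (bern_aux q a \<beta> x n)) step"
    by (simp add: bind_map_pmf)
  also have "\<dots> = bind_pmf (jump_pmf q a \<beta> x n) (\<lambda>b. step (x n + (if b then 1 else 0)))"
    by (simp add: Suc bind_map_pmf)
  also have "\<dots> = map_pmf (\<lambda>b. x (Suc n) + (if b then 1 else 0)) (jump_pmf q a \<beta> x (Suc n))"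
    using Suc by (auto simp: map_bind_pmf step_def intro!: bind_pmf_cong)
  finally show ?case .
qed

lemma bern_move_component:
  assumes "1 \<le> n" "n \<le> L"
  shows "map_pmf (\<lambda>y. y n) (bern_move q L a \<beta> x) = map_pmf (\<lambda>b. x n + (if b then 1 else 0)) (jump_pmf q a \<beta> x n)"
  unfolding bern_move_def using map_bern_aux_component[OF assms(2)] map_bern_aux_last[OF assms(1)] by simp

lemma pmf_jump_pmf_Suc_False:
  assumes "1 \<le> n" and q: "0 \<le> q" "q \<le> 1" and r: "0 \<le> bern_rate a \<beta> (Suc n)" "bern_rate a \<beta> (Suc n) \<le> 1"
  shows "pmf (jump_pmf q a \<beta> x (Suc n)) False =
    1 - bern_rate a \<beta> (Suc n) + bern_rate a \<beta> (Suc n) * q ^ nat (x n - x (Suc n) - 1) * pmf (jump_pmf q a \<beta> x n) False"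
proof -
  define Q where "Q = q ^ nat (x n - x (Suc n) - 1)"
  define pr where "pr b = (if b then bern_rate a \<beta> (Suc n) else (1 - Q) * bern_rate a \<beta> (Suc n))" for b
  have "0 \<le> Q" "Q \<le> 1" using q by (simp_all add: Q_def power_le_one)
  then have "(1 - Q) * bern_rate a \<beta> (Suc n) \<le> 1 * 1" using r by (intro mult_mono) auto
  then have pr: "0 \<le> pr b \<and> pr b \<le> 1" for b using r \<open>Q \<le> 1\<close> by (simp add: pr_def)
  have step: "jump_pmf q a \<beta> x (Suc n) = bind_pmf (jump_pmf q a \<beta> x n) (\<lambda>b. bernoulli_pmf (pr b))"
    unfolding pr_def Q_def using assms(1) by simp
  have "pmf (jump_pmf q a \<beta> x (Suc n)) False = (\<integral>b. 1 - pr b \<partial>jump_pmf q a \<beta> x n)"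
    unfolding step pmf_bind using pr by (intro Bochner_Integration.integral_cong refl) auto
  also have "\<dots> = 1 - bern_rate a \<beta> (Suc n) + bern_rate a \<beta> (Suc n) * Q * pmf (jump_pmf q a \<beta> x n) False"
    unfolding expectation_bool_pmf pmf_bool_True pr_def by (simp add: algebra_simps)
  finally show ?thesis by (simp add: Q_def)
qed

lemma bind_bern_move_component:
  assumes "1 \<le> n" "n \<le> L" "\<And>b. 0 \<le> f (if b then 1 else 0) \<and> f (if b then 1 else 0) \<le> 1"
  shows "bind_pmf (bern_move q L a \<beta> x) (\<lambda>y. bernoulli_pmf (f (nat (y n - x n))))
    = bernoulli_pmf (measure_pmf.expectation (jump_pmf q a \<beta> x n) (\<lambda>b. f (if b then 1 else 0)))"
proof -
  have "bind_pmf (bern_move q L a \<beta> x) (\<lambda>y. bernoulli_pmf (f (nat (y n - x n))))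
      = bind_pmf (map_pmf (\<lambda>y. y n) (bern_move q L a \<beta> x)) (\<lambda>w. bernoulli_pmf (f (nat (w - x n))))"
    by (simp add: bind_map_pmf)
  also have "\<dots> = bind_pmf (jump_pmf q a \<beta> x n) (\<lambda>b. bernoulli_pmf (f (if b then 1 else 0)))"
    unfolding bern_move_component[OF assms(1,2)] bind_map_pmf by (intro bind_pmf_cong) auto
  finally show ?thesis using assms(3) by (simp add: bind_pmf_bernoulli)
qed

locale q_tasep =
  fixes q \<alpha> \<beta> :: real and L :: nat and a :: "nat \<Rightarrow> real" and x :: "nat \<Rightarrow> int"
  assumes q_pos: "0 < q" and q_less_1: "q < 1" and L_pos: "1 \<le> L"
    and a_pos: "\<And>i. 1 \<le> i \<Longrightarrow> i \<le> L \<Longrightarrow> 0 < a i"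
    and \<alpha>_pos: "0 < \<alpha>" and \<beta>_pos: "0 < \<beta>"
    and \<alpha>a_less_1: "\<And>i. 1 \<le> i \<Longrightarrow> i \<le> L \<Longrightarrow> \<alpha> * a i < 1"
    and config: "config L x"
begin

abbreviation r :: "nat \<Rightarrow> real" where
  "r \<equiv> bern_rate a \<beta>"

definition gjump :: "nat \<Rightarrow> nat pmf" where
  "gjump i = geo_pmf q (a i * \<alpha>) (gap x i)"

definition shift :: "(nat \<Rightarrow> nat) \<Rightarrow> nat \<Rightarrow> int" where
  "shift F = (\<lambda>i. x i + int (F i))"

definition gap_len :: "nat \<Rightarrow> nat" where
  "gap_len i = nat (x (i - 1) - x i - 1)"

definition c :: real where
  "c = 1 + \<alpha> / \<beta>"

lemma geo_move_eq_shift: "geo_move q L a \<alpha> x = map_pmf shift (Pi_pmf {1..L} 0 gjump)"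
  unfolding geo_move_def shift_def gjump_def[abs_def] by simp

lemma gap_len_eq:
  assumes "2 \<le> i" "i \<le> L"
  shows "x (i - 1) - x i - 1 = int (gap_len i)"
proof -
  obtain j where "i = Suc j" "1 \<le> j" "j < L" using assms by (cases i) auto
  then have "x i < x (i - 1)" using config unfolding config_def by simp
  then show ?thesis using assms by (simp add: gap_len_def)
qed

lemma gap_eq_Some: "2 \<le> i \<Longrightarrow> gap x i = Some (gap_len i)"
  by (simp add: gap_def gap_len_def)

lemma q_geometric_jump: "1 \<le> i \<Longrightarrow> i \<le> L \<Longrightarrow> q_geometric q (a i * \<alpha>)"
  using q_pos q_less_1 a_pos[of i] \<alpha>a_less_1[of i] \<alpha>_pos by unfold_locales (auto simp: mult.commute)

lemma expectation_gjump_qpower: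
  "1 \<le> i \<Longrightarrow> i \<le> L \<Longrightarrow> measure_pmf.expectation (gjump i) (\<lambda>j. q ^ j) = 1 - a i * \<alpha> * (1 - qpow q (gap x i))"
  unfolding gjump_def by (rule q_geometric.expectation_geo_pmf_qpower[OF q_geometric_jump])

lemma set_gjump_le:
  assumes "2 \<le> i" "i \<le> L" "v \<in> set_pmf (gjump i)"
  shows "v \<le> gap_len i"
proof -
  have "q_geometric q (a i * \<alpha>)" using assms by (intro q_geometric_jump) auto
  moreover have "v \<in> set_pmf (geo_pmf q (a i * \<alpha>) (Some (gap_len i)))"
    using assms by (simp add: gjump_def gap_eq_Some)
  ultimately show ?thesis by (rule q_geometric.set_geo_pmf_Some)
qed

lemma qpower_bounds: "0 \<le> q ^ k \<and> q ^ k \<le> 1"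
  using q_pos q_less_1 by (simp add: power_le_one)

lemma rate_bounds: "1 \<le> i \<Longrightarrow> i \<le> L \<Longrightarrow> 0 < r i \<and> r i < 1"
  using mult_pos_pos[OF a_pos[of i] \<beta>_pos] by (simp add: bern_rate_def divide_less_eq)

lemma rate_identity: "1 \<le> i \<Longrightarrow> i \<le> L \<Longrightarrow> (c - 1) * r i = (1 - r i) * (a i * \<alpha>)"
  using mult_pos_pos[OF a_pos[of i] \<beta>_pos] \<beta>_pos
  by (simp add: bern_rate_def c_def field_simps add_pos_pos)

definition jump_prob :: "nat \<Rightarrow> real" where
  "jump_prob n = pmf (jump_pmf q a \<beta> x n) True"

definition stay_prob :: "nat \<Rightarrow> (nat \<Rightarrow> nat) \<Rightarrow> real" where
  "stay_prob n F = pmf (jump_pmf q a \<beta> (shift F) n) False"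

definition stay_moment :: "nat set \<Rightarrow> nat \<Rightarrow> real" where
  "stay_moment I n = (\<integral>F. q ^ F n * stay_prob n F \<partial>Pi_pmf I 0 gjump)"

lemma pmf_jump_pmf_Suc_False':
  assumes "1 \<le> n" "Suc n \<le> L"
  shows "pmf (jump_pmf q a \<beta> y (Suc n)) False =
    1 - r (Suc n) + r (Suc n) * q ^ nat (y n - y (Suc n) - 1) * pmf (jump_pmf q a \<beta> y n) False"
  using rate_bounds[of "Suc n"] assms q_pos q_less_1 by (intro pmf_jump_pmf_Suc_False) auto

lemma jump_prob_1: "jump_prob 1 = r 1"
  using rate_bounds[of 1] L_pos by (simp add: jump_prob_def)

lemma jump_prob_Suc:
  assumes "1 \<le> n" "Suc n \<le> L"
  shows "jump_prob (Suc n) = r (Suc n) * (1 - q ^ gap_len (Suc n) * (1 - jump_prob n))"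
  using pmf_jump_pmf_Suc_False'[OF assms, of x] gap_len_eq[of "Suc n"] assms
  by (simp add: jump_prob_def pmf_bool_True algebra_simps)

lemma stay_prob_bounds: "0 \<le> stay_prob n F \<and> stay_prob n F \<le> 1"
  by (simp add: stay_prob_def pmf_le_1)

lemma weighted_stay_prob_Suc:
  assumes "1 \<le> n" "Suc n \<le> L" "F (Suc n) \<le> gap_len (Suc n)"
  shows "q ^ F (Suc n) * stay_prob (Suc n) F =
    (1 - r (Suc n)) * q ^ F (Suc n) + r (Suc n) * q ^ gap_len (Suc n) * (q ^ F n * stay_prob n F)"
proof -
  have "shift F n - shift F (Suc n) - 1 = int (gap_len (Suc n) + F n - F (Suc n))"
    using gap_len_eq[of "Suc n"] assms by (simp add: shift_def of_nat_diff)
  then have gap: "nat (shift F n - shift F (Suc n) - 1) = gap_len (Suc n) + F n - F (Suc n)" by simp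
  have "q ^ F (Suc n) * q ^ (gap_len (Suc n) + F n - F (Suc n)) = q ^ gap_len (Suc n) * q ^ F n"
    using assms(3) by (simp flip: power_add)
  then show ?thesis
    unfolding stay_prob_def pmf_jump_pmf_Suc_False'[OF assms(1,2)] gap by (simp add: algebra_simps)
qed

lemma integrable_weighted_stay_prob:
  "integrable (Pi_pmf I 0 gjump) (\<lambda>F. C * (q ^ F n * stay_prob n F))"
proof (rule integrable_measure_pmf_bounded[where B="\<bar>C\<bar>"])
  fix F
  have "\<bar>q ^ F n * stay_prob n F\<bar> \<le> 1"
    using qpower_bounds[of "F n"] stay_prob_bounds[of n F] by (auto simp: abs_mult intro: mult_le_one)
  then show "\<bar>C * (q ^ F n * stay_prob n F)\<bar> \<le> \<bar>C\<bar>" by (simp add: abs_mult mult_left_le)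
qed

lemma stay_moment_1:
  assumes "finite I" "1 \<in> I"
  shows "stay_moment I 1 = (1 - r 1) * (1 - a 1 * \<alpha>)"
proof -
  have "stay_moment I 1 = (1 - r 1) * (\<integral>F. q ^ F 1 \<partial>Pi_pmf I 0 gjump)"
    using rate_bounds[of 1] L_pos by (simp add: stay_moment_def stay_prob_def mult.commute)
  also have "(\<integral>F. q ^ F 1 \<partial>Pi_pmf I 0 gjump) = 1 - a 1 * \<alpha>"
    using expectation_Pi_pmf_component[OF assms, where f="\<lambda>j. q ^ j" and d=0 and D=gjump] expectation_gjump_qpower[of 1] L_pos
    by (simp add: gap_def qpow_def)
  finally show ?thesis .
qed

lemma stay_moment_Suc:
  assumes "finite I" "{1..Suc n} \<subseteq> I" "1 \<le> n" "Suc n \<le> L"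
  shows "stay_moment I (Suc n) = (1 - r (Suc n)) * (1 - a (Suc n) * \<alpha> * (1 - q ^ gap_len (Suc n)))
    + r (Suc n) * q ^ gap_len (Suc n) * stay_moment I n"
proof -
  have n_in_I: "Suc n \<in> I" using assms by auto
  have "F (Suc n) \<le> gap_len (Suc n)" if "F \<in> set_pmf (Pi_pmf I 0 gjump)" for F
    using set_gjump_le[OF _ _ Pi_pmf_component_in_set_pmf[OF assms(1) that n_in_I]] assms by auto
  then have "AE F in Pi_pmf I 0 gjump. q ^ F (Suc n) * stay_prob (Suc n) F =
    (1 - r (Suc n)) * q ^ F (Suc n) + r (Suc n) * q ^ gap_len (Suc n) * (q ^ F n * stay_prob n F)"
    using assms by (intro AE_pmfI weighted_stay_prob_Suc) auto
  then have "stay_moment I (Suc n) = (\<integral>F. (1 - r (Suc n)) * q ^ F (Suc n)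
      + r (Suc n) * q ^ gap_len (Suc n) * (q ^ F n * stay_prob n F) \<partial>Pi_pmf I 0 gjump)"
    unfolding stay_moment_def by (intro integral_cong_AE) auto
  also have "\<dots> = (1 - r (Suc n)) * (\<integral>F. q ^ F (Suc n) \<partial>Pi_pmf I 0 gjump)
      + r (Suc n) * q ^ gap_len (Suc n) * stay_moment I n"
    using integrable_weighted_stay_prob[of I "r (Suc n) * q ^ gap_len (Suc n)" n]
      integrable_measure_pmf_bounded[of "\<lambda>F. (1 - r (Suc n)) * q ^ F (Suc n)" "\<bar>1 - r (Suc n)\<bar>"]
      qpower_bounds
    by (simp add: stay_moment_def abs_mult mult_left_le)
  also have "(\<integral>F. q ^ F (Suc n) \<partial>Pi_pmf I 0 gjump) = 1 - a (Suc n) * \<alpha> * (1 - q ^ gap_len (Suc n))"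
    using expectation_Pi_pmf_component[OF assms(1) n_in_I, where f="\<lambda>j. q ^ j" and d=0 and D=gjump]
      expectation_gjump_qpower[of "Suc n"] assms
    by (simp add: gap_eq_Some qpow_def)
  finally show ?thesis by simp
qed

lemma stay_moment_eq:
  assumes "1 \<le> n" "n \<le> L" "finite I" "{1..n} \<subseteq> I"
  shows "stay_moment I n = 1 - c * jump_prob n"
  using assms
proof (induction n rule: nat_induct_at_least)
  case base
  then have "stay_moment I 1 = (1 - r 1) * (1 - a 1 * \<alpha>)" by (intro stay_moment_1) auto
  moreover have "(c - 1) * r 1 = (1 - r 1) * (a 1 * \<alpha>)" using L_pos by (intro rate_identity) auto
  ultimately show ?case unfolding jump_prob_1 by (simp add: algebra_simps)
next
  case (Suc n)
  define R Q A where "R = r (Suc n)" and "Q = q ^ gap_len (Suc n)" and "A = a (Suc n) * \<alpha>"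
  have "{1..n} \<subseteq> I" using Suc.prems by auto
  then have IH: "stay_moment I n = 1 - c * jump_prob n" using Suc.IH Suc.prems by simp
  have "(c - 1) * R = (1 - R) * A"
    unfolding R_def A_def using Suc by (intro rate_identity) auto
  moreover have "(1 - R) * (1 - A * (1 - Q)) + R * Q * (1 - c * jump_prob n) - (1 - c * (R * (1 - Q * (1 - jump_prob n))))
      = (1 - Q) * ((c - 1) * R - (1 - R) * A)"
    by (simp add: algebra_simps)
  ultimately have "(1 - R) * (1 - A * (1 - Q)) + R * Q * (1 - c * jump_prob n) = 1 - c * (R * (1 - Q * (1 - jump_prob n)))"
    by simp
  then show ?case
    using Suc by (simp add: stay_moment_Suc jump_prob_Suc IH R_def Q_def A_def mult.assoc)
qed

lemma jump_rate_bounds: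
  assumes "1 \<le> i" "i \<le> L"
  shows "0 \<le> (if b then r i else (1 - q ^ k) * r i) \<and> (if b then r i else (1 - q ^ k) * r i) \<le> 1"
proof -
  have "(1 - q ^ k) * r i \<le> 1 * 1"
    using rate_bounds[OF assms] qpower_bounds[of k] by (intro mult_mono) auto
  then show ?thesis using rate_bounds[OF assms] qpower_bounds[of k] by auto
qed

lemma Lw_jump_values:
  assumes "1 \<le> i" "i \<le> L"
  shows "Lw q (- \<beta>) (a i) (\<alpha> * a i) g 0 1 = r i * (1 - qpow q g)"
    and "Lw q (- \<beta>) (a i) (\<alpha> * a i) g 1 1 = a i * \<alpha> * qpow q g * (1 - r i) + r i"
proof -
  have pos: "1 + a i * \<beta> \<noteq> 0" using mult_pos_pos[OF a_pos[OF assms] \<beta>_pos] by linarith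
  then show "Lw q (- \<beta>) (a i) (\<alpha> * a i) g 0 1 = r i * (1 - qpow q g)"
    by (simp add: Lw_def bern_rate_def field_simps)
  have "1 - r i = 1 / (1 + a i * \<beta>)" using pos by (simp add: bern_rate_def field_simps)
  then show "Lw q (- \<beta>) (a i) (\<alpha> * a i) g 1 1 = a i * \<alpha> * qpow q g * (1 - r i) + r i"
    by (simp add: Lw_def bern_rate_def add_divide_distrib mult_ac)
qed

lemma Lw_jump_bounds:
  assumes "1 \<le> i" "i \<le> L"
  shows "0 \<le> Lw q (- \<beta>) (a i) (\<alpha> * a i) g (if b then 1 else 0) 1
    \<and> Lw q (- \<beta>) (a i) (\<alpha> * a i) g (if b then 1 else 0) 1 \<le> 1"
proof -
  have g: "0 \<le> qpow q g" "qpow q g \<le> 1"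
    using qpower_bounds by (auto simp: qpow_def split: option.splits)
  have "a i * \<alpha> * qpow q g \<le> 1 * 1"
    using g a_pos[OF assms] \<alpha>_pos \<alpha>a_less_1[OF assms] by (intro mult_mono) (auto simp: mult.commute)
  then have "a i * \<alpha> * qpow q g * (1 - r i) \<le> 1 - r i"
    using rate_bounds[OF assms] g a_pos[OF assms] \<alpha>_pos by (intro mult_left_le_one_le) auto
  then have "a i * \<alpha> * qpow q g * (1 - r i) + r i \<le> 1" by linarith
  then have "0 \<le> Lw q (- \<beta>) (a i) (\<alpha> * a i) g 1 1 \<and> Lw q (- \<beta>) (a i) (\<alpha> * a i) g 1 1 \<le> 1"
    unfolding Lw_jump_values[OF assms] using g rate_bounds[OF assms] a_pos[OF assms] \<alpha>_pos by simp
  moreover have "0 \<le> Lw q (- \<beta>) (a i) (\<alpha> * a i) g 0 1 \<and> Lw q (- \<beta>) (a i) (\<alpha> * a i) g 0 1 \<le> 1"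
    unfolding Lw_jump_values[OF assms] using g rate_bounds[OF assms]
    by (auto intro: mult_le_one)
  ultimately show ?thesis by (cases b) simp_all
qed

definition pair_law :: "nat \<Rightarrow> (nat \<Rightarrow> real) \<Rightarrow> (int \<times> int) pmf" where
  "pair_law m P = bind_pmf (gjump m) (\<lambda>v.
     map_pmf (\<lambda>b. (x m + int v, x m + int v + (if b then 1 else 0))) (bernoulli_pmf (P v)))"

lemma bind_geo_move_component:
  assumes "1 \<le> m" "m \<le> L"
  shows "bind_pmf (geo_move q L a \<alpha> x) (\<lambda>x'. \<Theta> (x' m)) = bind_pmf (gjump m) (\<lambda>v. \<Theta> (x m + int v))"
  using bind_Pi_pmf_component[of "{1..L}" m 0 gjump "\<lambda>v. \<Theta> (x m + int v)"] assms
  by (simp add: geo_move_eq_shift bind_map_pmf shift_def)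

lemma dagger_pair_1: "dagger_pair q L a \<alpha> \<beta> x 1 = pair_law 1 (\<lambda>_. r 1)"
proof -
  have "Lw q (- \<beta>) (a 1) (\<alpha> * a 1) None 0 1 = r 1"
    using Lw_jump_values(1)[of 1 None] L_pos by (simp add: qpow_def)
  then have "dagger_pair q L a \<alpha> \<beta> x 1 = bind_pmf (geo_move q L a \<alpha> x) (\<lambda>x'.
      map_pmf (\<lambda>b. (x' 1, x' 1 + (if b then 1 else 0))) (bernoulli_pmf (r 1)))"
    by (simp add: dagger_pair_def bind_pmf_pair_pmf bind_pmf_const)
  also have "\<dots> = pair_law 1 (\<lambda>_. r 1)"
    unfolding pair_law_def
    by (rule bind_geo_move_component[where \<Theta>="\<lambda>w. map_pmf (\<lambda>b. (w, w + (if b then 1 else 0))) (bernoulli_pmf (r 1))"])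
      (use L_pos in auto)
  finally show ?thesis .
qed

definition dagger_jump_prob :: "nat \<Rightarrow> nat \<Rightarrow> real" where
  "dagger_jump_prob m v = (\<integral>b. Lw q (- \<beta>) (a m) (\<alpha> * a m) (Some (nat (x (m - 1) - (x m + int v) - 1)))
     (if b then 1 else 0) 1 \<partial>jump_pmf q a \<beta> x (m - 1))"

lemma dagger_pair_eq:
  assumes "2 \<le> m" "m \<le> L"
  shows "dagger_pair q L a \<alpha> \<beta> x m = pair_law m (dagger_jump_prob m)"
proof -
  define K where "K w j1 = Lw q (- \<beta>) (a m) (\<alpha> * a m) (Some (nat (x (m - 1) - w - 1))) j1 1" for w j1
  define pair where "pair w = (\<lambda>b. (w, w + (if b then 1 :: int else 0)))" for w
  have "dagger_pair q L a \<alpha> \<beta> x m = bind_pmf (geo_move q L a \<alpha> x) (\<lambda>x'. bind_pmf (bern_move q L a \<beta> x)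
      (\<lambda>y. map_pmf (pair (x' m)) (bernoulli_pmf (K (x' m) (nat (y (m - 1) - x (m - 1)))))))"
    using assms unfolding dagger_pair_def bind_pmf_pair_pmf Let_def K_def pair_def
    by (subst bind_commute_pmf) simp
  also have "\<dots> = bind_pmf (geo_move q L a \<alpha> x) (\<lambda>x'. map_pmf (pair (x' m))
      (bernoulli_pmf (\<integral>b. K (x' m) (if b then 1 else 0) \<partial>jump_pmf q a \<beta> x (m - 1))))"
  proof -
    have "bind_pmf (bern_move q L a \<beta> x) (\<lambda>y. bernoulli_pmf (K w (nat (y (m - 1) - x (m - 1)))))
        = bernoulli_pmf (\<integral>b. K w (if b then 1 else 0) \<partial>jump_pmf q a \<beta> x (m - 1))" for w
      using assms Lw_jump_bounds[of m] unfolding K_def by (intro bind_bern_move_component) auto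
    then show ?thesis by (simp only: flip: map_bind_pmf)
  qed
  also have "\<dots> = bind_pmf (gjump m) (\<lambda>v. map_pmf (pair (x m + int v))
      (bernoulli_pmf (\<integral>b. K (x m + int v) (if b then 1 else 0) \<partial>jump_pmf q a \<beta> x (m - 1))))"
    by (rule bind_geo_move_component) (use assms in auto)
  finally show ?thesis
    by (simp add: pair_law_def dagger_jump_prob_def K_def pair_def)
qed

lemma GB_pair_eq_bind:
  assumes "1 \<le> m" "m \<le> L"
  shows "GB_pair q L a \<alpha> \<beta> x m = bind_pmf (Pi_pmf {1..L} 0 gjump) (\<lambda>F.
    map_pmf (\<lambda>b. (shift F m, shift F m + (if b then 1 else 0))) (jump_pmf q a \<beta> (shift F) m))"
  unfolding GB_pair_def geo_move_eq_shift bind_map_pmf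
proof (intro bind_pmf_cong refl)
  fix F
  have "map_pmf (\<lambda>y. (shift F m, y m)) (bern_move q L a \<beta> (shift F))
      = map_pmf (Pair (shift F m)) (map_pmf (\<lambda>y. y m) (bern_move q L a \<beta> (shift F)))"
    by (simp add: pmf.map_comp o_def)
  then show "map_pmf (\<lambda>y. (shift F m, y m)) (bern_move q L a \<beta> (shift F)) =
      map_pmf (\<lambda>b. (shift F m, shift F m + (if b then 1 else 0))) (jump_pmf q a \<beta> (shift F) m)"
    using bern_move_component[OF assms] by (simp add: pmf.map_comp o_def)
qed

lemma GB_pair_1: "GB_pair q L a \<alpha> \<beta> x 1 = pair_law 1 (\<lambda>_. r 1)"
proof -
  have "GB_pair q L a \<alpha> \<beta> x 1 = bind_pmf (Pi_pmf {1..L} 0 gjump) (\<lambda>F.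
      map_pmf (\<lambda>b. (x 1 + int (F 1), x 1 + int (F 1) + (if b then 1 else 0))) (bernoulli_pmf (r 1)))"
    using GB_pair_eq_bind[of 1] L_pos by (simp add: shift_def)
  also have "\<dots> = pair_law 1 (\<lambda>_. r 1)"
    unfolding pair_law_def using L_pos
    by (intro bind_Pi_pmf_component[where \<Theta>="\<lambda>v. map_pmf (\<lambda>b. (x 1 + int v, x 1 + int v + (if b then 1 else 0))) (bernoulli_pmf (r 1))"]) auto
  finally show ?thesis .
qed

definition GB_jump_prob :: "nat \<Rightarrow> nat \<Rightarrow> real" where
  "GB_jump_prob m v = (\<integral>F. (\<integral>b. (if b then r m else (1 - q ^ nat (shift F (m - 1) - (x m + int v) - 1)) * r m)
     \<partial>jump_pmf q a \<beta> (shift F) (m - 1)) \<partial>Pi_pmf ({1..L} - {m}) 0 gjump)"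

lemma jump_pmf_shift_upd:
  assumes "2 \<le> m" "m \<le> L"
  shows "jump_pmf q a \<beta> (shift (F(m := v))) m = bernoulli_pmf
    (\<integral>b. (if b then r m else (1 - q ^ nat (shift F (m - 1) - (x m + int v) - 1)) * r m) \<partial>jump_pmf q a \<beta> (shift F) (m - 1))"
proof -
  have m: "Suc (m - 1) = m" "1 \<le> m - 1" using assms by auto
  have "jump_pmf q a \<beta> (shift (F(m := v))) (m - 1) = jump_pmf q a \<beta> (shift F) (m - 1)"
    using assms by (intro jump_pmf_cong) (auto simp: shift_def)
  moreover have "shift (F(m := v)) (m - 1) = shift F (m - 1)" "shift (F(m := v)) m = x m + int v"
    using assms by (auto simp: shift_def)
  ultimately have "jump_pmf q a \<beta> (shift (F(m := v))) m = bind_pmf (jump_pmf q a \<beta> (shift F) (m - 1))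
      (\<lambda>b. bernoulli_pmf (if b then r m else (1 - q ^ nat (shift F (m - 1) - (x m + int v) - 1)) * r m))"
    using jump_pmf_Suc[OF m(2), of q a \<beta> "shift (F(m := v))"] unfolding m(1) by (simp only:)
  also have "\<dots> = bernoulli_pmf (\<integral>b. (if b then r m else (1 - q ^ nat (shift F (m - 1) - (x m + int v) - 1)) * r m)
      \<partial>jump_pmf q a \<beta> (shift F) (m - 1))"
    using assms jump_rate_bounds[of m] by (intro bind_pmf_bernoulli) auto
  finally show ?thesis .
qed

lemma GB_pair_eq:
  assumes "2 \<le> m" "m \<le> L"
  shows "GB_pair q L a \<alpha> \<beta> x m = pair_law m (GB_jump_prob m)"
proof -
  define I where "I = {1..L} - {m}"
  define h where "h F v = (\<integral>b. (if b then r m else (1 - q ^ nat (shift F (m - 1) - (x m + int v) - 1)) * r m)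
     \<partial>jump_pmf q a \<beta> (shift F) (m - 1))" for F v
  define pair where "pair v = (\<lambda>b. (x m + int v, x m + int v + (if b then 1 :: int else 0)))" for v
  have shift_upd_self: "shift (F(m := v)) m = x m + int v" for F v by (simp add: shift_def)
  have insert: "{1..L} = insert m I" using assms by (auto simp: I_def)
  have fin: "finite I" and notin: "m \<notin> I" by (auto simp: I_def)
  have h_bounds: "0 \<le> h F v \<and> h F v \<le> 1" for F v
    unfolding h_def using assms jump_rate_bounds[of m] by (intro expectation_pmf_unit_interval) auto
  have "GB_pair q L a \<alpha> \<beta> x m = bind_pmf (Pi_pmf (insert m I) 0 gjump) (\<lambda>F.
      map_pmf (\<lambda>b. (shift F m, shift F m + (if b then 1 else 0))) (jump_pmf q a \<beta> (shift F) m))"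
    using assms by (simp add: GB_pair_eq_bind flip: insert)
  also have "\<dots> = bind_pmf (gjump m) (\<lambda>v. bind_pmf (Pi_pmf I 0 gjump) (\<lambda>F.
      map_pmf (pair v) (jump_pmf q a \<beta> (shift (F(m := v))) m)))"
    unfolding Pi_pmf_insert[OF fin notin] by (simp add: bind_map_pmf bind_pmf_pair_pmf shift_upd_self pair_def)
  also have "\<dots> = bind_pmf (gjump m) (\<lambda>v. bind_pmf (Pi_pmf I 0 gjump) (\<lambda>F.
      map_pmf (pair v) (bernoulli_pmf (h F v))))"
    by (simp only: jump_pmf_shift_upd[OF assms] h_def)
  also have "\<dots> = bind_pmf (gjump m) (\<lambda>v. map_pmf (pair v) (bernoulli_pmf (GB_jump_prob m v)))"
    using h_bounds
    by (simp add: map_bind_pmf[symmetric] bind_pmf_bernoulli GB_jump_prob_def h_def I_def)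
  finally show ?thesis by (simp add: pair_law_def pair_def)
qed

lemma dagger_jump_prob_closed:
  assumes "2 \<le> m" "m \<le> L" "v \<le> gap_len m"
  shows "dagger_jump_prob m v = jump_prob (m - 1) * (a m * \<alpha> * q ^ (gap_len m - v) * (1 - r m) + r m)
    + (1 - jump_prob (m - 1)) * (r m * (1 - q ^ (gap_len m - v)))"
proof -
  have "nat (x (m - 1) - (x m + int v) - 1) = gap_len m - v"
    using gap_len_eq[OF assms(1,2)] assms(3) by simp
  then show ?thesis
    using Lw_jump_values[of m "Some (gap_len m - v)"] assms
    by (simp add: dagger_jump_prob_def expectation_bool_pmf jump_prob_def pmf_bool_True qpow_def)
qed

lemma GB_jump_prob_closed:
  assumes "2 \<le> m" "m \<le> L" "v \<le> gap_len m"
  shows "GB_jump_prob m v = r m - r m * q ^ (gap_len m - v) * stay_moment ({1..L} - {m}) (m - 1)"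
proof -
  define Q where "Q = q ^ (gap_len m - v)"
  have inner: "(\<integral>b. (if b then r m else (1 - q ^ nat (shift F (m - 1) - (x m + int v) - 1)) * r m)
      \<partial>jump_pmf q a \<beta> (shift F) (m - 1)) = r m - r m * Q * (q ^ F (m - 1) * stay_prob (m - 1) F)" for F
  proof -
    have "nat (shift F (m - 1) - (x m + int v) - 1) = gap_len m - v + F (m - 1)"
      using gap_len_eq[OF assms(1,2)] assms(3) by (simp add: shift_def)
    then show ?thesis
      by (simp add: expectation_bool_pmf pmf_bool_True stay_prob_def Q_def power_add algebra_simps)
  qed
  have "GB_jump_prob m v = (\<integral>F. r m - r m * Q * (q ^ F (m - 1) * stay_prob (m - 1) F) \<partial>Pi_pmf ({1..L} - {m}) 0 gjump)"
    unfolding GB_jump_prob_def inner ..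
  also have "\<dots> = r m - r m * Q * stay_moment ({1..L} - {m}) (m - 1)"
    using integrable_weighted_stay_prob[of "{1..L} - {m}" "r m * Q" "m - 1"]
    by (simp add: stay_moment_def)
  finally show ?thesis by (simp add: Q_def)
qed

lemma dagger_jump_prob_eq_GB_jump_prob:
  assumes "2 \<le> m" "m \<le> L" "v \<le> gap_len m"
  shows "dagger_jump_prob m v = GB_jump_prob m v"
proof -
  have stay: "stay_moment ({1..L} - {m}) (m - 1) = 1 - c * jump_prob (m - 1)"
    using assms by (intro stay_moment_eq) auto
  have "GB_jump_prob m v - dagger_jump_prob m v
      = jump_prob (m - 1) * q ^ (gap_len m - v) * ((c - 1) * r m - (1 - r m) * (a m * \<alpha>))"
    unfolding dagger_jump_prob_closed[OF assms] GB_jump_prob_closed[OF assms] stay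
    by (simp add: algebra_simps)
  also have "(c - 1) * r m = (1 - r m) * (a m * \<alpha>)"
    using assms by (intro rate_identity) auto
  finally show ?thesis by simp
qed

end

theorem proposition5p11:
  fixes q \<alpha> \<beta> :: real and L m :: nat and a :: "nat \<Rightarrow> real" and x :: "nat \<Rightarrow> int"
  assumes "0 < q" "q < 1"
    and "1 \<le> L"
    and "\<And>i. 1 \<le> i \<Longrightarrow> i \<le> L \<Longrightarrow> 0 < a i"
    and "0 < \<alpha>" "0 < \<beta>"
    and "\<And>i. 1 \<le> i \<Longrightarrow> i \<le> L \<Longrightarrow> \<alpha> * a i < 1"
    and "config L x"
    and "1 \<le> m" "m \<le> L"
  shows "dagger_pair q L a \<alpha> \<beta> x m = GB_pair q L a \<alpha> \<beta> x m"
proof -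
  interpret q_tasep q \<alpha> \<beta> L a x
    using assms by unfold_locales auto
  show ?thesis
  proof (cases "m = 1")
    case True
    then show ?thesis by (simp only: dagger_pair_1 GB_pair_1)
  next
    case False
    then have m: "2 \<le> m" "m \<le> L" using assms by auto
    show ?thesis
      unfolding dagger_pair_eq[OF m] GB_pair_eq[OF m] pair_law_def
      using set_gjump_le[OF m] dagger_jump_prob_eq_GB_jump_prob[OF m]
      by (intro bind_pmf_cong) auto
  qed
qed

end
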